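(* Let $N$ be a simply connected nilpotent Lie group with Lie algebra $\mathfrak n$, $(\delta_t)_{t>0}$ a one-parameter group of dilations given by subspaces $(m_p)_p$, and $M$ a connected closed subgroup of $N$ with Lie algebra $\mathfrak m$. Then the subspace $\mathfrak m_\infty=\lim_{t\to+\infty}\delta_{1/t}(\mathfrak m)$ is a Lie subalgebra of the graded Lie algebra $\mathfrak n_0$.
   Context: Let $C^p(\mathfrak n)$ be the descending central series; choose subspaces $m_p$ with $C^p(\mathfrak n)=m_p\oplus C^{p+1}(\mathfrak n)$, so $\mathfrak n=\bigoplus_p m_p$, and let $\pi_p$ be the projection onto $m_p$. The dilation $\delta_t$ is the linear map acting by $t^p$ on $m_p$. The graded Lie algebra $\mathfrak n_0$ is the vector space $\mathfrak n$ with bracket defined by $[x,y]_0=\pi_{p+q}([x,y])$ for $x\in m_p$, $y\in m_q$ (extended bilinearly). The limit $\mathfrak m_\infty$ is taken in the Grassmannian of $\dim\mathfrak m$-dimensional subspaces of $\mathfrak n$; this limit exists. *)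

theory Defs
  imports "HOL-Analysis.Analysis"
begin

text \<open>A finite-dimensional real Lie algebra structure on a Euclidean space 'a
  (the Euclidean structure is only used to topologise the Grassmannian).\<close>
definition lie_algebra :: "('a::euclidean_space \<Rightarrow> 'a \<Rightarrow> 'a) \<Rightarrow> bool" where
  "lie_algebra br \<longleftrightarrow> bilinear br \<and> (\<forall>x. br x x = 0) \<and>
     (\<forall>x y z. br x (br y z) + br y (br z x) + br z (br x y) = 0)"

definition lie_subalgebra :: "('a::euclidean_space \<Rightarrow> 'a \<Rightarrow> 'a) \<Rightarrow> 'a set \<Rightarrow> bool" where
  "lie_subalgebra br S \<longleftrightarrow> subspace S \<and> (\<forall>x\<in>S. \<forall>y\<in>S. br x y \<in> S)"

fun lcs :: "('a::euclidean_space \<Rightarrow> 'a \<Rightarrow> 'a) \<Rightarrow> nat \<Rightarrow> 'a set" where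
  "lcs br 0 = UNIV"
| "lcs br (Suc 0) = UNIV"
| "lcs br (Suc (Suc p)) = span {br x y | x y. y \<in> lcs br (Suc p)}"

definition nilpotent_lie :: "('a::euclidean_space \<Rightarrow> 'a \<Rightarrow> 'a) \<Rightarrow> bool" where
  "nilpotent_lie br \<longleftrightarrow> lie_algebra br \<and> (\<exists>k. lcs br k = {0})"

definition adapted_grading :: "('a::euclidean_space \<Rightarrow> 'a \<Rightarrow> 'a) \<Rightarrow> (nat \<Rightarrow> 'a set) \<Rightarrow> bool" where
  "adapted_grading br m \<longleftrightarrow> (\<forall>p\<ge>1. subspace (m p) \<and> m p \<subseteq> lcs br p \<and>
      m p \<inter> lcs br (Suc p) = {0} \<and> {x + y | x y. x \<in> m p \<and> y \<in> lcs br (Suc p)} = lcs br p)"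

text \<open>Projection \<pi>_p onto m_p along the other m_q in n = \<Oplus>_{p\<ge>1} m_p.\<close>
definition grade_proj :: "(nat \<Rightarrow> 'a::euclidean_space set) \<Rightarrow> nat \<Rightarrow> 'a \<Rightarrow> 'a" where
  "grade_proj m p x = (THE f. (\<forall>q\<ge>1. f q \<in> m q) \<and> f 0 = 0 \<and> finite {q. f q \<noteq> 0} \<and>
       x = (\<Sum>q\<in>{q. f q \<noteq> 0}. f q)) p"

definition dilation :: "(nat \<Rightarrow> 'a::euclidean_space set) \<Rightarrow> real \<Rightarrow> 'a \<Rightarrow> 'a" where
  "dilation m t x = (\<Sum>p\<in>{p. grade_proj m p x \<noteq> 0}. (t ^ p) *\<^sub>R grade_proj m p x)"

definition graded_bracket :: "('a::euclidean_space \<Rightarrow> 'a \<Rightarrow> 'a) \<Rightarrow> (nat \<Rightarrow> 'a set) \<Rightarrow> 'a \<Rightarrow> 'a \<Rightarrow> 'a" where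
  "graded_bracket br m x y =
     (\<Sum>p\<in>{p. grade_proj m p x \<noteq> 0}. \<Sum>q\<in>{q. grade_proj m q y \<noteq> 0}.
        grade_proj m (p + q) (br (grade_proj m p x) (grade_proj m q y)))"

text \<open>Convergence in the Grassmannian of k-dimensional subspaces, via the usual
  embedding by orthogonal projections.\<close>
definition grass_tendsto :: "nat \<Rightarrow> ('b \<Rightarrow> 'a::euclidean_space set) \<Rightarrow> 'a set \<Rightarrow> 'b filter \<Rightarrow> bool" where
  "grass_tendsto k V W F \<longleftrightarrow> subspace W \<and> dim W = k \<and>
     (\<forall>\<^sub>F t in F. subspace (V t) \<and> dim (V t) = k) \<and>
     (\<forall>x. ((\<lambda>t. closest_point (V t) x) \<longlongrightarrow> closest_point W x) F)"

end

theory Submission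
  imports Defs
begin

text \<open>
  For \<open>x, y \<in> m_inf\<close> let \<open>x_t, y_t\<close> be their orthogonal projections onto
  \<open>\<delta>_(1/t)(m)\<close>, so \<open>x_t \<rightarrow> x\<close> and \<open>y_t \<rightarrow> y\<close>. Since \<open>m\<close> is a subalgebra,
  \<open>\<delta>_(1/t)[\<delta>_t x_t, \<delta>_t y_t]\<close> lies in \<open>\<delta>_(1/t)(m)\<close>. Its component of degree \<open>r\<close> is
  \<open>\<Sum>_(p,q) t^(p+q-r) \<pi>_r[\<pi>_p x_t, \<pi>_q y_t]\<close>; the inclusion \<open>[C^p, C^q] \<subseteq> C^(p+q)\<close>
  kills the terms with \<open>r < p + q\<close>, the terms with \<open>r > p + q\<close> tend to \<open>0\<close>, and the
  terms with \<open>r = p + q\<close> tend to \<open>[x, y]_0\<close>. So \<open>[x, y]_0\<close> is a limit of points of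
  \<open>\<delta>_(1/t)(m)\<close> and hence lies in \<open>m_inf\<close>.
\<close>

section \<open>Lie algebras and the descending central series\<close>

lemma lie_algebra_bilinear: "lie_algebra br \<Longrightarrow> bilinear br"
  by (simp add: lie_algebra_def)

lemma lie_algebra_anticomm:
  assumes "lie_algebra br"
  shows "br x y = - br y x"
proof -
  have bil: "bilinear br" and alt: "\<And>z. br z z = 0"
    using assms by (auto simp: lie_algebra_def)
  have "br x x + br y x + (br x y + br y y) = 0"
    using alt[of "x + y"] by (simp add: bilinear_ladd[OF bil] bilinear_radd[OF bil])
  then show ?thesis
    by (simp add: alt eq_neg_iff_add_eq_0 add.commute)
qed

lemma lie_algebra_bracket_bracket:
  assumes "lie_algebra br"
  shows "br (br u v) b = br u (br v b) + br v (br b u)"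
proof -
  have "br u (br v b) + br v (br b u) + br b (br u v) = 0"
    using assms by (simp add: lie_algebra_def)
  then show ?thesis
    using lie_algebra_anticomm[OF assms, of b "br u v"]
    by (simp add: algebra_simps eq_neg_iff_add_eq_0)
qed

lemma bilinear_sum_sum:
  assumes "bilinear h"
  shows "h (sum f A) (sum g B) = (\<Sum>p\<in>A. \<Sum>q\<in>B. h (f p) (g q))"
proof -
  have left: "linear (\<lambda>x. h x y)" and right: "linear (h x)" for x y
    using assms by (auto simp: bilinear_def)
  have "h (sum f A) (sum g B) = (\<Sum>p\<in>A. h (f p) (sum g B))"
    by (simp add: linear_sum[OF left])
  also have "\<dots> = (\<Sum>p\<in>A. \<Sum>q\<in>B. h (f p) (g q))"
    by (simp add: linear_sum[OF right])
  finally show ?thesis .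
qed

lemma lcs_subspace: "subspace (lcs br p)"
  by (induction br p rule: lcs.induct) (auto simp: subspace_UNIV subspace_span)

lemma lcs_Suc_eq: "1 \<le> p \<Longrightarrow> lcs br (Suc p) = span {br x y | x y. y \<in> lcs br p}"
  by (cases p) auto

lemma lcs_Suc_subset: "lcs br (Suc p) \<subseteq> lcs br p"
proof (induction p)
  case (Suc p)
  then show ?case
    by (cases p) (auto intro!: span_mono)
qed simp

lemma lcs_antimono: "p \<le> q \<Longrightarrow> lcs br q \<subseteq> lcs br p"
  using lift_Suc_antimono_le[of "lcs br", OF lcs_Suc_subset] by blast

lemma bracket_mem_lcs_Suc: "1 \<le> p \<Longrightarrow> y \<in> lcs br p \<Longrightarrow> br x y \<in> lcs br (Suc p)"
  by (auto simp: lcs_Suc_eq intro: span_base)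

lemma bracket_mem_lcs_add:
  assumes lie: "lie_algebra br" and "1 \<le> p" "1 \<le> q" "a \<in> lcs br p" "b \<in> lcs br q"
  shows "br a b \<in> lcs br (p + q)"
  using assms(2-)
proof (induction p arbitrary: a b q rule: nat_induct_at_least)
  case base
  then show ?case
    using bracket_mem_lcs_Suc[of q b br a] by simp
next
  case (Suc p)
  have bil: "bilinear br"
    using lie_algebra_bilinear[OF lie] .
  have "subspace {a. br a b \<in> lcs br (Suc p + q)}"
    using lcs_subspace[of br "Suc p + q"]
    by (auto simp: subspace_def bilinear_ladd[OF bil] bilinear_lmul[OF bil] bilinear_lzero[OF bil])
  moreover have "br c b \<in> lcs br (Suc p + q)" if gen: "c \<in> {br u v | u v. v \<in> lcs br p}" for c
  proof -
    obtain u v where c: "c = br u v" and v: "v \<in> lcs br p"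
      using gen by blast
    have "br v b \<in> lcs br (p + q)"
      using Suc v by blast
    then have "br u (br v b) \<in> lcs br (Suc p + q)"
      using bracket_mem_lcs_Suc[of "p + q"] Suc.hyps by simp
    moreover have "br b u \<in> lcs br (Suc q)"
      using bracket_mem_lcs_Suc Suc.prems lie_algebra_anticomm[OF lie, of b u]
        lcs_subspace subspace_neg by metis
    then have "br v (br b u) \<in> lcs br (Suc p + q)"
      using Suc.IH[of "Suc q" v "br b u"] v by simp
    ultimately show ?thesis
      using c lie_algebra_bracket_bracket[OF lie] lcs_subspace subspace_add by metis
  qed
  moreover have "a \<in> span {br u v | u v. v \<in> lcs br p}"
    using Suc.prems Suc.hyps by (simp add: lcs_Suc_eq)
  ultimately show ?case
    using span_induct[of a _ "\<lambda>a. br a b \<in> lcs br (Suc p + q)"] by blast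
qed

section \<open>Limits in the Grassmannian\<close>

lemma grass_tendsto_closest_point:
  assumes "grass_tendsto k V W F" "x \<in> W"
  shows "\<forall>\<^sub>F t in F. closest_point (V t) x \<in> V t"
    and "((\<lambda>t. closest_point (V t) x) \<longlongrightarrow> x) F"
proof -
  have "\<forall>\<^sub>F t in F. subspace (V t)"
    using assms(1) unfolding grass_tendsto_def by (auto elim: eventually_mono)
  then show "\<forall>\<^sub>F t in F. closest_point (V t) x \<in> V t"
    by (rule eventually_mono) (metis closest_point_in_set closed_subspace empty_iff subspace_0)
  show "((\<lambda>t. closest_point (V t) x) \<longlongrightarrow> x) F"
    using assms closest_point_self[OF assms(2)] unfolding grass_tendsto_def by metis
qed

lemma grass_tendsto_limit_mem:
  assumes lim: "grass_tendsto k V W F" and "F \<noteq> bot"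
    and mem: "\<forall>\<^sub>F t in F. z t \<in> V t" and z: "(z \<longlongrightarrow> w) F"
  shows "w \<in> W"
proof -
  have "\<forall>\<^sub>F t in F. subspace (V t)"
    using lim unfolding grass_tendsto_def by (auto elim: eventually_mono)
  then have "\<forall>\<^sub>F t in F. subspace (V t) \<and> z t \<in> V t"
    using mem by (rule eventually_conj)
  then have "\<forall>\<^sub>F t in F. norm (dist (closest_point (V t) w) w) \<le> dist (z t) w"
  proof (rule eventually_mono)
    fix t assume "subspace (V t) \<and> z t \<in> V t"
    then have "dist w (closest_point (V t) w) \<le> dist w (z t)"
      by (intro closest_point_le closed_subspace) auto
    then show "norm (dist (closest_point (V t) w) w) \<le> dist (z t) w"
      by (simp add: dist_commute)
  qed
  moreover have "((\<lambda>t. dist (z t) w) \<longlongrightarrow> 0) F"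
    using z tendsto_dist_iff by blast
  ultimately have "((\<lambda>t. dist (closest_point (V t) w) w) \<longlongrightarrow> 0) F"
    by (rule Lim_null_comparison)
  then have "((\<lambda>t. closest_point (V t) w) \<longlongrightarrow> w) F"
    using tendsto_dist_iff by blast
  moreover have "((\<lambda>t. closest_point (V t) w) \<longlongrightarrow> closest_point W w) F"
    using lim unfolding grass_tendsto_def by blast
  ultimately have "closest_point W w = w"
    using tendsto_unique[OF \<open>F \<noteq> bot\<close>] by blast
  moreover have "subspace W"
    using lim unfolding grass_tendsto_def by blast
  ultimately show ?thesis
    by (metis closest_point_in_set closed_subspace empty_iff subspace_0)
qed

section \<open>The grading of a nilpotent Lie algebra\<close>

locale adapted_nilpotent =
  fixes br :: "'a::euclidean_space \<Rightarrow> 'a \<Rightarrow> 'a" and m :: "nat \<Rightarrow> 'a set" and K :: nat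
  assumes lie: "lie_algebra br" and grading: "adapted_grading br m"
    and lcs_vanishes: "lcs br K = {0}"
begin

abbreviation \<pi> where "\<pi> \<equiv> grade_proj m"

lemma bilinear_br: "bilinear br"
  using lie_algebra_bilinear[OF lie] .

lemma grade_subspace: "1 \<le> p \<Longrightarrow> subspace (m p)"
  and grade_subset_lcs: "1 \<le> p \<Longrightarrow> m p \<subseteq> lcs br p"
  and grade_inter_lcs_Suc: "1 \<le> p \<Longrightarrow> m p \<inter> lcs br (Suc p) = {0}"
  and grade_plus_lcs_Suc: "1 \<le> p \<Longrightarrow> {x + y | x y. x \<in> m p \<and> y \<in> lcs br (Suc p)} = lcs br p"
  using grading unfolding adapted_grading_def by (simp only:)+

lemma lcs_eq_0: "K \<le> p \<Longrightarrow> lcs br p = {0}"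
  using lcs_antimono[of K p br] lcs_vanishes subspace_0[OF lcs_subspace] by blast

lemma lcs_graded_decomposition:
  assumes "1 \<le> p" "x \<in> lcs br p"
  shows "\<exists>f. (\<forall>q\<ge>1. f q \<in> m q) \<and> (\<forall>q<p. f q = 0) \<and> (\<forall>q\<ge>K. f q = 0) \<and> x = (\<Sum>q<K. f q)"
  using assms
proof (induction "K - p" arbitrary: p x)
  case 0
  then have "x = 0"
    using lcs_eq_0 by auto
  then show ?case
    by (intro exI[of _ "\<lambda>_. 0"]) (simp add: grade_subspace subspace_0)
next
  case (Suc n)
  obtain a y where a: "a \<in> m p" and y: "y \<in> lcs br (Suc p)" and x: "x = a + y"
    using Suc.prems grade_plus_lcs_Suc by blast
  have "n = K - Suc p"
    using Suc.hyps(2) by arith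
  then obtain g where g: "\<forall>q\<ge>1. g q \<in> m q" "\<forall>q<Suc p. g q = 0" "\<forall>q\<ge>K. g q = 0"
    and y_sum: "y = (\<Sum>q<K. g q)"
    using Suc.hyps(1)[of "Suc p" y] y by auto
  have pK: "p < K"
    using Suc.hyps(2) by simp
  have "g(p := a) = (\<lambda>q. g q + (if q = p then a else 0))"
    using g(2) by auto
  then have "x = (\<Sum>q<K. (g(p := a)) q)"
    using pK x y_sum by (simp add: sum.distrib)
  then show ?case
    using g a pK by (intro exI[of _ "g(p := a)"]) auto
qed

lemma graded_components_unique:
  assumes h: "\<forall>q\<ge>1. h q \<in> m q" and h0: "h 0 = 0" and S: "finite S"
    and sum0: "(\<Sum>q\<in>S. h q) = 0" and supp: "{q. h q \<noteq> 0} \<subseteq> S"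
  shows "h q = 0"
proof (induction q rule: less_induct)
  case (less q)
  \<comment> \<open>a lowest nonzero component would lie in \<open>m q \<inter> lcs br (Suc q) = {0}\<close>\<close>
  show ?case
  proof (cases "q = 0 \<or> q \<notin> S")
    case True
    then show ?thesis using h0 supp by auto
  next
    case False
    then have q: "1 \<le> q" "q \<in> S" by auto
    have "h q' \<in> lcs br (Suc q)" if "q' \<in> S - {q}" for q'
    proof (cases "q' < q")
      case True
      then show ?thesis using less.IH[of q'] subspace_0[OF lcs_subspace] by simp
    next
      case False
      then have q': "Suc q \<le> q'"
        using that by auto
      then have "h q' \<in> lcs br q'"
        using h grade_subset_lcs[of q'] by auto
      then show ?thesis
        using lcs_antimono[OF q'] by blast
    qed
    then have "(\<Sum>q'\<in>S - {q}. h q') \<in> lcs br (Suc q)"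
      by (rule subspace_sum[OF lcs_subspace])
    moreover have "h q = - (\<Sum>q'\<in>S - {q}. h q')"
      using sum0 sum.remove[OF S q(2), of h] by (simp add: eq_neg_iff_add_eq_0)
    ultimately have "h q \<in> lcs br (Suc q)"
      using lcs_subspace subspace_neg by metis
    then show ?thesis
      using h q grade_inter_lcs_Suc by blast
  qed
qed

lemma grade_proj_eqI:
  assumes f: "\<forall>q\<ge>1. f q \<in> m q" and f0: "f 0 = 0" and S: "finite S"
    and outside: "\<forall>q. q \<notin> S \<longrightarrow> f q = 0" and x: "x = (\<Sum>q\<in>S. f q)"
  shows "\<pi> p x = f p"
proof -
  have supp: "{q. f q \<noteq> 0} \<subseteq> S"
    using outside by blast
  let ?dec = "\<lambda>g. (\<forall>q\<ge>1. g q \<in> m q) \<and> g 0 = 0 \<and> finite {q. g q \<noteq> 0} \<and>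
       x = (\<Sum>q\<in>{q. g q \<noteq> 0}. g q)"
  have sum_supp: "(\<Sum>q\<in>{q. g q \<noteq> 0}. g q) = (\<Sum>q\<in>T. g q)"
    if "finite T" "{q. g q \<noteq> 0} \<subseteq> T" for g :: "nat \<Rightarrow> 'a" and T
    by (rule sum.mono_neutral_left) (use that in auto)
  have uniq: "g = f" if g: "?dec g" for g
  proof -
    let ?T = "{q. g q \<noteq> 0} \<union> S"
    have T: "finite ?T" using g S by blast
    have "(\<Sum>q\<in>?T. g q) = x"
      using sum_supp[OF T, of g] g by simp
    moreover have "(\<Sum>q\<in>?T. f q) = x"
      using sum_supp[OF T, of f] sum_supp[OF S supp] x supp by (simp add: le_supI2)
    ultimately have sum0: "(\<Sum>q\<in>?T. g q - f q) = 0"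
      by (simp add: sum_subtractf)
    have graded: "\<forall>q\<ge>1. g q - f q \<in> m q"
      using f g subspace_diff[OF grade_subspace] by blast
    have "{q. g q - f q \<noteq> 0} \<subseteq> ?T"
      using supp by auto
    then have "g q - f q = 0" for q
      using graded_components_unique[OF graded _ T sum0] g f0 by simp
    then show ?thesis by (simp add: fun_eq_iff)
  qed
  have "?dec f"
    using f f0 S supp x sum_supp[OF S supp] by (auto intro: finite_subset)
  then have "(THE g. ?dec g) = f"
    using uniq by (rule the_equality)
  then show ?thesis unfolding grade_proj_def by simp
qed

lemma grade_proj_of_lcs:
  assumes "1 \<le> s" "z \<in> lcs br s"
  shows "\<forall>q\<ge>1. \<pi> q z \<in> m q" "\<forall>q<s. \<pi> q z = 0" "\<forall>q\<ge>K. \<pi> q z = 0" "z = (\<Sum>q<K. \<pi> q z)"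
proof -
  obtain f where f: "\<forall>q\<ge>1. f q \<in> m q" "\<forall>q<s. f q = 0" "\<forall>q\<ge>K. f q = 0" "z = (\<Sum>q<K. f q)"
    using lcs_graded_decomposition[OF assms] by blast
  have "\<forall>q. q \<notin> {..<K} \<longrightarrow> f q = 0"
    using f(3) by (simp add: not_less)
  then have "\<pi> q z = f q" for q
    using grade_proj_eqI[OF f(1) _ _ _ f(4)] f(2) assms(1) by simp
  then show "\<forall>q\<ge>1. \<pi> q z \<in> m q" "\<forall>q<s. \<pi> q z = 0" "\<forall>q\<ge>K. \<pi> q z = 0" "z = (\<Sum>q<K. \<pi> q z)"
    using f by simp_all
qed

lemma grade_proj_mem: "1 \<le> q \<Longrightarrow> \<pi> q x \<in> m q"
  and grade_proj_0_left: "\<pi> 0 x = 0"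
  and grade_proj_eq_0: "K \<le> q \<Longrightarrow> \<pi> q x = 0"
  and sum_grade_proj: "(\<Sum>q<K. \<pi> q x) = x"
  using grade_proj_of_lcs[of 1 x] by auto

lemma grade_proj_support: "{q. \<pi> q x \<noteq> 0} \<subseteq> {..<K}"
  using grade_proj_eq_0 not_less by blast

lemma grade_proj_lcs_eq_0: "1 \<le> s \<Longrightarrow> z \<in> lcs br s \<Longrightarrow> r < s \<Longrightarrow> \<pi> r z = 0"
  using grade_proj_of_lcs(2) by blast

lemma grade_proj_grade:
  assumes "1 \<le> p" "a \<in> m p"
  shows "\<pi> q a = (if q = p then a else 0)"
proof (rule grade_proj_eqI[of _ "{p}"])
  show "\<forall>q\<ge>1. (if q = p then a else 0) \<in> m q"
    using assms grade_subspace subspace_0 by auto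
qed (use assms in auto)

lemma linear_grade_proj: "linear (\<pi> q)"
proof (rule linearI)
  fix x y
  show "\<pi> q (x + y) = \<pi> q x + \<pi> q y"
  proof (rule grade_proj_eqI[of _ "{..<K}"])
    show "\<forall>q\<ge>1. \<pi> q x + \<pi> q y \<in> m q"
      using grade_proj_mem grade_subspace subspace_add by blast
    show "x + y = (\<Sum>q<K. \<pi> q x + \<pi> q y)"
      by (simp add: sum.distrib sum_grade_proj)
  qed (auto simp: grade_proj_0_left grade_proj_eq_0 not_less)
next
  fix c x
  show "\<pi> q (c *\<^sub>R x) = c *\<^sub>R \<pi> q x"
  proof (rule grade_proj_eqI[of _ "{..<K}"])
    show "\<forall>q\<ge>1. c *\<^sub>R \<pi> q x \<in> m q"
      using grade_proj_mem grade_subspace subspace_scale by blast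
    show "c *\<^sub>R x = (\<Sum>q<K. c *\<^sub>R \<pi> q x)"
      by (simp add: scaleR_sum_right[symmetric] sum_grade_proj)
  qed (auto simp: grade_proj_0_left grade_proj_eq_0 not_less)
qed

lemma grade_proj_grade_proj: "\<pi> q (\<pi> p x) = (if q = p then \<pi> p x else 0)"
proof (cases "p = 0")
  case True
  then show ?thesis
    using grade_proj_0_left linear_0[OF linear_grade_proj] by simp
qed (simp add: grade_proj_grade grade_proj_mem)

lemma dilation_eq_sum: "dilation m t x = (\<Sum>p<K. t ^ p *\<^sub>R \<pi> p x)"
  unfolding dilation_def by (rule sum.mono_neutral_left) (use grade_proj_support in auto)

lemma grade_proj_dilation: "\<pi> q (dilation m t x) = t ^ q *\<^sub>R \<pi> q x"
proof -
  have "\<pi> q (dilation m t x) = (\<Sum>p<K. if q = p then t ^ q *\<^sub>R \<pi> q x else 0)"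
    unfolding dilation_eq_sum
    by (simp add: linear_sum[OF linear_grade_proj] linear_scale[OF linear_grade_proj]
        grade_proj_grade_proj if_distrib cong: if_cong)
  also have "\<dots> = t ^ q *\<^sub>R \<pi> q x"
    using grade_proj_eq_0[of q x] by (auto simp: sum.delta)
  finally show ?thesis .
qed

lemma dilation_mult: "dilation m s (dilation m t x) = dilation m (s * t) x"
  by (simp add: dilation_eq_sum[of s] grade_proj_dilation dilation_eq_sum[of "s * t"]
      power_mult_distrib)

lemma dilation_1: "dilation m 1 x = x"
  by (simp add: dilation_eq_sum sum_grade_proj)

lemma grade_proj_bracket_eq_0: "r < p + q \<Longrightarrow> \<pi> r (br (\<pi> p a) (\<pi> q b)) = 0"
proof (cases "p = 0 \<or> q = 0")
  case True
  then show ?thesis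
    using grade_proj_0_left linear_0[OF linear_grade_proj]
      bilinear_lzero[OF bilinear_br] bilinear_rzero[OF bilinear_br] by auto
next
  case False
  then have p: "1 \<le> p" and q: "1 \<le> q"
    by auto
  have "\<pi> p a \<in> lcs br p" "\<pi> q b \<in> lcs br q"
    using grade_proj_mem grade_subset_lcs p q by blast+
  then have "br (\<pi> p a) (\<pi> q b) \<in> lcs br (p + q)"
    by (rule bracket_mem_lcs_add[OF lie p q])
  moreover assume "r < p + q"
  ultimately show ?thesis
    using p grade_proj_lcs_eq_0 by simp
qed

text \<open>Truncated subtraction in the exponent is harmless: the terms with \<open>r < p + q\<close> vanish.\<close>

lemma dilation_conj_bracket:
  assumes "t \<noteq> 0"
  shows "dilation m (1/t) (br (dilation m t a) (dilation m t b)) =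
    (\<Sum>r<K. \<Sum>p<K. \<Sum>q<K. (1/t) ^ (r - (p + q)) *\<^sub>R \<pi> r (br (\<pi> p a) (\<pi> q b)))"
proof -
  have "dilation m (1/t) (br (dilation m t a) (dilation m t b)) =
    (\<Sum>r<K. \<Sum>p<K. \<Sum>q<K. ((1/t) ^ r * t ^ p * t ^ q) *\<^sub>R \<pi> r (br (\<pi> p a) (\<pi> q b)))"
    unfolding dilation_eq_sum bilinear_sum_sum[OF bilinear_br]
    by (simp add: bilinear_lmul[OF bilinear_br] bilinear_rmul[OF bilinear_br]
        linear_sum[OF linear_grade_proj] linear_scale[OF linear_grade_proj] scaleR_sum_right mult_ac)
  also have "\<dots> = (\<Sum>r<K. \<Sum>p<K. \<Sum>q<K. (1/t) ^ (r - (p + q)) *\<^sub>R \<pi> r (br (\<pi> p a) (\<pi> q b)))"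
  proof (intro sum.cong refl)
    fix r p q
    show "((1/t) ^ r * t ^ p * t ^ q) *\<^sub>R \<pi> r (br (\<pi> p a) (\<pi> q b)) =
      (1/t) ^ (r - (p + q)) *\<^sub>R \<pi> r (br (\<pi> p a) (\<pi> q b))"
    proof (cases "r < p + q")
      case False
      then have "(1/t) ^ r = (1/t) ^ (r - (p + q)) * (1/t) ^ p * (1/t) ^ q"
        by (simp add: power_add[symmetric])
      then show ?thesis
        using assms by (simp add: power_one_over field_simps)
    qed (simp add: grade_proj_bracket_eq_0)
  qed
  finally show ?thesis .
qed

text \<open>Since \<open>0 ^ n = (if n = 0 then 1 else 0)\<close>, this is the expansion above at \<open>1/t = 0\<close>.\<close>

lemma graded_bracket_eq_sum:
  "graded_bracket br m x y =
    (\<Sum>r<K. \<Sum>p<K. \<Sum>q<K. 0 ^ (r - (p + q)) *\<^sub>R \<pi> r (br (\<pi> p x) (\<pi> q y)))"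
proof -
  have inner: "(\<Sum>r<K. 0 ^ (r - (p + q)) *\<^sub>R \<pi> r (br (\<pi> p x) (\<pi> q y))) =
    \<pi> (p + q) (br (\<pi> p x) (\<pi> q y))" for p q
  proof -
    have "(\<Sum>r<K. 0 ^ (r - (p + q)) *\<^sub>R \<pi> r (br (\<pi> p x) (\<pi> q y))) =
      (\<Sum>r<K. if r = p + q then \<pi> r (br (\<pi> p x) (\<pi> q y)) else 0)"
    proof (rule sum.cong[OF refl])
      fix r
      show "0 ^ (r - (p + q)) *\<^sub>R \<pi> r (br (\<pi> p x) (\<pi> q y)) =
        (if r = p + q then \<pi> r (br (\<pi> p x) (\<pi> q y)) else 0)"
        by (cases "r < p + q") (auto simp: grade_proj_bracket_eq_0)
    qed
    then show ?thesis
      using grade_proj_eq_0[of "p + q"] by (simp add: sum.delta' not_less)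
  qed
  have "graded_bracket br m x y = (\<Sum>p<K. \<Sum>q<K. \<pi> (p + q) (br (\<pi> p x) (\<pi> q y)))"
    unfolding graded_bracket_def
    using grade_proj_support[of x] grade_proj_support[of y]
    by (intro sum.mono_neutral_cong_left sum.mono_neutral_left)
      (auto simp: bilinear_lzero[OF bilinear_br] bilinear_rzero[OF bilinear_br]
        linear_0[OF linear_grade_proj])
  also have "\<dots> = (\<Sum>p<K. \<Sum>q<K. \<Sum>r<K. 0 ^ (r - (p + q)) *\<^sub>R \<pi> r (br (\<pi> p x) (\<pi> q y)))"
    by (simp add: inner)
  also have "\<dots> = (\<Sum>p<K. \<Sum>r<K. \<Sum>q<K. 0 ^ (r - (p + q)) *\<^sub>R \<pi> r (br (\<pi> p x) (\<pi> q y)))"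
    by (rule sum.cong[OF refl], rule sum.swap)
  also have "\<dots> = (\<Sum>r<K. \<Sum>p<K. \<Sum>q<K. 0 ^ (r - (p + q)) *\<^sub>R \<pi> r (br (\<pi> p x) (\<pi> q y)))"
    by (rule sum.swap)
  finally show ?thesis .
qed

lemma dilation_conj_bracket_tendsto:
  assumes u: "(u \<longlongrightarrow> x) at_top" and v: "(v \<longlongrightarrow> y) at_top"
  shows "((\<lambda>t. dilation m (1/t) (br (dilation m t (u t)) (dilation m t (v t))))
    \<longlongrightarrow> graded_bracket br m x y) at_top"
proof -
  have inv: "((\<lambda>t::real. 1/t) \<longlongrightarrow> 0) at_top"
    using tendsto_inverse_0_at_top[OF filterlim_ident] by (simp add: inverse_eq_divide)
  have proj: "bounded_linear (\<pi> q)" for q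
    using linear_grade_proj linear_conv_bounded_linear by blast
  have bracket: "bounded_bilinear br"
    using bilinear_br bilinear_conv_bounded_bilinear by blast
  have "((\<lambda>t. \<Sum>r<K. \<Sum>p<K. \<Sum>q<K. (1/t) ^ (r - (p + q)) *\<^sub>R \<pi> r (br (\<pi> p (u t)) (\<pi> q (v t))))
    \<longlongrightarrow> (\<Sum>r<K. \<Sum>p<K. \<Sum>q<K. 0 ^ (r - (p + q)) *\<^sub>R \<pi> r (br (\<pi> p x) (\<pi> q y)))) at_top"
    by (intro tendsto_sum tendsto_scaleR tendsto_power inv bounded_linear.tendsto[OF proj]
        bounded_bilinear.tendsto[OF bracket] u v)
  moreover have "\<forall>\<^sub>F t in at_top.
      (\<Sum>r<K. \<Sum>p<K. \<Sum>q<K. (1/t) ^ (r - (p + q)) *\<^sub>R \<pi> r (br (\<pi> p (u t)) (\<pi> q (v t)))) =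
      dilation m (1/t) (br (dilation m t (u t)) (dilation m t (v t)))"
    using eventually_gt_at_top[of 0] by eventually_elim (simp add: dilation_conj_bracket)
  ultimately show ?thesis
    unfolding graded_bracket_eq_sum by (rule Lim_transform_eventually)
qed

lemma dilation_conj_bracket_mem:
  assumes "lie_subalgebra br M" "t \<noteq> 0"
    and "u \<in> dilation m (1/t) ` M" "v \<in> dilation m (1/t) ` M"
  shows "dilation m (1/t) (br (dilation m t u) (dilation m t v)) \<in> dilation m (1/t) ` M"
proof -
  obtain a b where "a \<in> M" "b \<in> M" "u = dilation m (1/t) a" "v = dilation m (1/t) b"
    using assms(3,4) by blast
  moreover have "dilation m t (dilation m (1/t) c) = c" for c
    using assms(2) by (simp add: dilation_mult dilation_1)
  ultimately show ?thesis
    using assms(1) unfolding lie_subalgebra_def by auto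
qed

lemma lie_subalgebra_dilation_limit:
  assumes sub: "lie_subalgebra br M"
    and lim: "grass_tendsto k (\<lambda>t. dilation m (1/t) ` M) W at_top"
  shows "lie_subalgebra (graded_bracket br m) W"
  unfolding lie_subalgebra_def
proof (intro conjI ballI)
  show "subspace W"
    using lim by (simp add: grass_tendsto_def)
  fix x y assume "x \<in> W" "y \<in> W"
  define u where "u t = closest_point (dilation m (1/t) ` M) x" for t
  define v where "v t = closest_point (dilation m (1/t) ` M) y" for t
  have u_mem: "\<forall>\<^sub>F t in at_top. u t \<in> dilation m (1/t) ` M" and u_lim: "(u \<longlongrightarrow> x) at_top"
    using grass_tendsto_closest_point[OF lim \<open>x \<in> W\<close>] unfolding u_def by simp_all
  have v_mem: "\<forall>\<^sub>F t in at_top. v t \<in> dilation m (1/t) ` M" and v_lim: "(v \<longlongrightarrow> y) at_top"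
    using grass_tendsto_closest_point[OF lim \<open>y \<in> W\<close>] unfolding v_def by simp_all
  have "\<forall>\<^sub>F t in at_top.
      dilation m (1/t) (br (dilation m t (u t)) (dilation m t (v t))) \<in> dilation m (1/t) ` M"
    using u_mem v_mem eventually_gt_at_top[of 0]
    by eventually_elim (simp add: dilation_conj_bracket_mem[OF sub])
  then show "graded_bracket br m x y \<in> W"
    by (rule grass_tendsto_limit_mem[OF lim trivial_limit_at_top_linorder])
      (rule dilation_conj_bracket_tendsto[OF u_lim v_lim])
qed

end

theorem lemma2p16:
  fixes br :: "'a::euclidean_space \<Rightarrow> 'a \<Rightarrow> 'a"
    and m :: "nat \<Rightarrow> 'a set"
    and mm :: "'a set"
    and m_inf :: "'a set"
  assumes "nilpotent_lie br"
    and "adapted_grading br m"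
    and "lie_subalgebra br mm"
    and "grass_tendsto (dim mm) (\<lambda>t. dilation m (1 / t) ` mm) m_inf at_top"
  shows "lie_subalgebra (graded_bracket br m) m_inf"
proof -
  obtain K where "lie_algebra br" "lcs br K = {0}"
    using assms(1) unfolding nilpotent_lie_def by blast
  then interpret adapted_nilpotent br m K
    using assms(2) by unfold_locales
  show ?thesis
    using lie_subalgebra_dilation_limit[OF assms(3,4)] .
qed

end
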